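(* Let $\sigma$ be a proper schedule and let $\sigma'$ be the intermediate schedule obtained from $\sigma$ by an admissible swap at step $j^*\in J$ between machines $M_h$ and $M_i$. Writing $C_j=C_j(\sigma)$ and $C'_j=C_j(\sigma')$: (1) $C'_j=C_j$ for all $j\notin J_H\cup J_I$; (2) $C'_j\le C_j$ for all $j\in J_H$; (3) $C'_j\ge C_j$ for all $j\in J_I$.
   Context: Jobs $J=\{1,\dots,n\}$, job $j$ with positive integer processing time $p_j$, are scheduled non-preemptively on $m$ identical machines $M_1,\dots,M_m$; $p_{\max}=\max_j p_j$, $P(X)=\sum_{j\in X}p_j$. A proper schedule $\sigma$ is a partition $J=J_1(\sigma)\cup\dots\cup J_m(\sigma)$, the jobs of $J_i(\sigma)$ processed on $M_i$ consecutively from time $0$ without idle time in increasing index order; $C_j(\sigma)$ is the completion time of $j$. $J_j=\{1,\dots,j\}$, $J_{i,j}(\sigma)=J_i(\sigma)\cap J_j$, $\Delta_{h,i,j}(\sigma)=P(J_{h,j}(\sigma))-P(J_{i,j}(\sigma))$. The swap: admissible for proper $\sigma$ at step $j^*$ with machines $M_h,M_i$ if $j^*\in J_h(\sigma)$, $|J_i(\sigma)\setminus J_{i,j^*}(\sigma)|\ge 2p_{\max}$, and $\Delta_{h,i,j^*}(\sigma)\ge 4p_{\max}^2$. Let $J_I$ be the first (smallest-index) $2p_{\max}$ jobs of $J_i(\sigma)\setminus J_{i,j^*}(\sigma)$ and $J_H$ the last (largest-index) $2p_{\max}$ jobs of $J_{h,j^*}(\sigma)$; choose non-empty $J_{H'}\subseteq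 J_H$, $J_{I'}\subseteq J_I$ with $P(J_{H'})=P(J_{I'})$. The intermediate schedule $\sigma'$ is obtained by modifying only $M_h$ and $M_i$: on $M_h$ the time interval occupied by $J_H$ in $\sigma$ is filled by the jobs of $J_H\setminus J_{H'}$ (in their order in $\sigma$) followed by those of $J_{I'}$ (in their order in $\sigma$); on $M_i$ the interval occupied by $J_I$ is filled by $J_{H'}$ followed by $J_I\setminus J_{I'}$ (each in their order in $\sigma$); all other jobs keep their positions. *)

theory Defs
  imports Main
begin

text \<open>Jobs are 1..n, machines are 1..m, processing times p :: nat => nat.
A proper schedule is given by its partition Js :: nat => nat set (Js i = J_i(sigma)).
A general (not necessarily proper) schedule is given by the job sequence on each
machine, L :: nat => nat list; jobs run consecutively from time 0 without idle time.\<close>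

definition P :: "(nat \<Rightarrow> nat) \<Rightarrow> nat set \<Rightarrow> nat" where
  "P p X = (\<Sum>j\<in>X. p j)"

definition pmax :: "nat \<Rightarrow> (nat \<Rightarrow> nat) \<Rightarrow> nat" where
  "pmax n p = Max (p ` {1..n})"

definition proper_partition :: "nat \<Rightarrow> nat \<Rightarrow> (nat \<Rightarrow> nat set) \<Rightarrow> bool" where
  "proper_partition n m Js \<longleftrightarrow>
     (\<Union>i\<in>{1..m}. Js i) = {1..n} \<and>
     (\<forall>i\<in>{1..m}. \<forall>i'\<in>{1..m}. i \<noteq> i' \<longrightarrow> Js i \<inter> Js i' = {})"

definition seqs_of :: "(nat \<Rightarrow> nat set) \<Rightarrow> nat \<Rightarrow> nat list" where
  "seqs_of Js = (\<lambda>i. sorted_list_of_set (Js i))"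

definition ctime :: "(nat \<Rightarrow> nat) \<Rightarrow> nat \<Rightarrow> (nat \<Rightarrow> nat list) \<Rightarrow> nat \<Rightarrow> nat" where
  "ctime p m L j = (\<Sum>i\<in>{1..m}. if j \<in> set (L i)
       then sum_list (map p (takeWhile (\<lambda>k. k \<noteq> j) (L i))) + p j else 0)"

definition Jpre :: "(nat \<Rightarrow> nat set) \<Rightarrow> nat \<Rightarrow> nat \<Rightarrow> nat set" where
  "Jpre Js i j = {k \<in> Js i. k \<le> j}"

definition Delta :: "(nat \<Rightarrow> nat) \<Rightarrow> (nat \<Rightarrow> nat set) \<Rightarrow> nat \<Rightarrow> nat \<Rightarrow> nat \<Rightarrow> int" where
  "Delta p Js h i j = int (P p (Jpre Js h j)) - int (P p (Jpre Js i j))"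

definition admissible_swap ::
  "nat \<Rightarrow> nat \<Rightarrow> (nat \<Rightarrow> nat) \<Rightarrow> (nat \<Rightarrow> nat set) \<Rightarrow> nat \<Rightarrow> nat \<Rightarrow> nat \<Rightarrow> bool" where
  "admissible_swap n m p Js jstar h i \<longleftrightarrow>
     h \<in> {1..m} \<and> i \<in> {1..m} \<and> jstar \<in> Js h \<and>
     card (Js i - Jpre Js i jstar) \<ge> 2 * pmax n p \<and>
     Delta p Js h i jstar \<ge> 4 * int (pmax n p) ^ 2"

definition JI :: "nat \<Rightarrow> (nat \<Rightarrow> nat) \<Rightarrow> (nat \<Rightarrow> nat set) \<Rightarrow> nat \<Rightarrow> nat \<Rightarrow> nat set" where
  "JI n p Js jstar i = set (take (2 * pmax n p) (sorted_list_of_set (Js i - Jpre Js i jstar)))"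

definition JH :: "nat \<Rightarrow> (nat \<Rightarrow> nat) \<Rightarrow> (nat \<Rightarrow> nat set) \<Rightarrow> nat \<Rightarrow> nat \<Rightarrow> nat set" where
  "JH n p Js jstar h = set (drop (card (Jpre Js h jstar) - 2 * pmax n p)
                              (sorted_list_of_set (Jpre Js h jstar)))"

definition replace_block :: "nat list \<Rightarrow> nat set \<Rightarrow> nat list \<Rightarrow> nat list" where
  "replace_block xs S ys =
     takeWhile (\<lambda>k. k \<notin> S) xs @ ys @ filter (\<lambda>k. k \<notin> S) (dropWhile (\<lambda>k. k \<notin> S) xs)"

definition intermediate ::
  "nat \<Rightarrow> (nat \<Rightarrow> nat) \<Rightarrow> (nat \<Rightarrow> nat set) \<Rightarrow> nat \<Rightarrow> nat \<Rightarrow> nat \<Rightarrow> nat set \<Rightarrow> nat set \<Rightarrow> nat \<Rightarrow> nat list" where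
  "intermediate n p Js jstar h i H' I' =
     (let L = seqs_of Js; H = JH n p Js jstar h; I = JI n p Js jstar i in
      L(h := replace_block (L h) H
               (filter (\<lambda>k. k \<notin> H') (sorted_list_of_set H) @ sorted_list_of_set I'),
        i := replace_block (L i) I
               (sorted_list_of_set H' @ filter (\<lambda>k. k \<notin> I') (sorted_list_of_set I))))"

end

theory Submission imports Defs begin

text \<open>
  Since the jobs of \<open>J_H'\<close> and
  \<open>J_I'\<close> have the same total processing time, both exchanged blocks keep their total length, so
  nothing outside them moves; inside a block, a job that stays only loses predecessors on
  \<open>M_h\<close> and gains at most \<open>P(J_I')\<close> on \<open>M_i\<close>. For the jobs that change machine, admissibility
  gives the margin: both blocks have total length at most \<open>2 p_max\<^sup>2\<close>, so the load gap
  \<open>\<Delta> \<ge> 4 p_max\<^sup>2\<close> puts the whole block \<open>J_I\<close> on \<open>M_i\<close> before the block \<open>J_H\<close> on \<open>M_h\<close> starts.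
\<close>

definition start_time :: "(nat \<Rightarrow> nat) \<Rightarrow> nat list \<Rightarrow> nat \<Rightarrow> nat" where
  "start_time p xs j = sum_list (map p (takeWhile (\<lambda>k. k \<noteq> j) xs))"

lemma start_time_append_in: "j \<in> set xs \<Longrightarrow> start_time p (xs @ ys) j = start_time p xs j"
  unfolding start_time_def by (subst takeWhile_append1) auto

lemma start_time_append_notin:
  "j \<notin> set xs \<Longrightarrow> start_time p (xs @ ys) j = sum_list (map p xs) + start_time p ys j"
  unfolding start_time_def by (subst takeWhile_append2) auto

lemma start_time_add_le_sum_list:
  "j \<in> set xs \<Longrightarrow> start_time p xs j + p j \<le> sum_list (map p xs)"
  unfolding start_time_def by (induction xs) auto

lemma start_time_filter_le: "Q j \<Longrightarrow> start_time p (filter Q xs) j \<le> start_time p xs j"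
  unfolding start_time_def by (induction xs) auto

lemma start_time_le_filter:
  "start_time p xs j \<le> start_time p (filter Q xs) j + sum_list (map p (filter (\<lambda>x. \<not> Q x) xs))"
  unfolding start_time_def by (induction xs) auto

lemma start_time_replace_same_sum:
  assumes "j \<notin> set xs" "j \<notin> set ys" "sum_list (map p ys) = sum_list (map p xs)"
  shows "start_time p (as @ ys @ bs) j = start_time p (as @ xs @ bs) j"
  using assms by (cases "j \<in> set as") (simp_all add: start_time_append_in start_time_append_notin)

lemma replace_block_append:
  assumes "distinct (as @ xs @ bs)" "xs \<noteq> []"
  shows "replace_block (as @ xs @ bs) (set xs) ys = as @ ys @ bs"
proof -
  have "takeWhile (\<lambda>k. k \<notin> set xs) (as @ xs @ bs) = as"
    using assms by (subst takeWhile_append2) (auto simp: neq_Nil_conv)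
  moreover have "dropWhile (\<lambda>k. k \<notin> set xs) (as @ xs @ bs) = xs @ bs"
    using assms by (subst dropWhile_append2) (auto simp: neq_Nil_conv)
  moreover have "filter (\<lambda>k. k \<notin> set xs) (xs @ bs) = bs"
    using assms by (auto simp: filter_id_conv)
  ultimately show ?thesis unfolding replace_block_def by simp
qed

lemma sum_list_sorted_list_of_set: "finite X \<Longrightarrow> sum_list (map p (sorted_list_of_set X)) = P p X"
  unfolding P_def by (simp add: sum_list_distinct_conv_sum_set)

lemma sum_list_filter_sorted_list_of_set:
  "finite X \<Longrightarrow> sum_list (map p (filter Q (sorted_list_of_set X))) = P p {x \<in> X. Q x}"
  unfolding P_def by (simp add: sum_list_distinct_conv_sum_set)

lemma P_diff_add: "finite X \<Longrightarrow> Y \<subseteq> X \<Longrightarrow> P p X = P p (X - Y) + P p Y"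
  unfolding P_def by (metis sum.subset_diff)

lemma P_mono: "finite X \<Longrightarrow> Y \<subseteq> X \<Longrightarrow> P p Y \<le> P p X"
  using P_diff_add by (metis le_add2)

lemma P_le_card_pmax: "X \<subseteq> {1..n} \<Longrightarrow> P p X \<le> card X * pmax n p"
  using sum_bounded_above[of X p "pmax n p"] unfolding P_def pmax_def by (auto intro: Max_ge)

lemma distinct_seqs_of: "distinct (seqs_of Js k)"
  unfolding seqs_of_def by simp

lemma sorted_list_of_set_set_sorted: "sorted xs \<Longrightarrow> distinct xs \<Longrightarrow> sorted_list_of_set (set xs) = xs"
  by (simp add: sorted_list_of_set.idem_if_sorted_distinct)

lemma seqs_of_split_Jpre:
  assumes "finite (Js k)"
  shows "seqs_of Js k = sorted_list_of_set (Jpre Js k t) @ sorted_list_of_set (Js k - Jpre Js k t)"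
proof -
  have "Js k = set (sorted_list_of_set (Jpre Js k t) @ sorted_list_of_set (Js k - Jpre Js k t))"
    using assms by (auto simp: Jpre_def)
  moreover have "sorted (sorted_list_of_set (Jpre Js k t) @ sorted_list_of_set (Js k - Jpre Js k t))"
    using assms by (auto simp: sorted_append Jpre_def)
  moreover have "distinct (sorted_list_of_set (Jpre Js k t) @ sorted_list_of_set (Js k - Jpre Js k t))"
    using assms by (auto simp: Jpre_def)
  ultimately show ?thesis
    unfolding seqs_of_def by (metis sorted_list_of_set_set_sorted)
qed

lemma proper_partition_finite:
  "proper_partition n m Js \<Longrightarrow> k \<in> {1..m} \<Longrightarrow> finite (Js k)"
  unfolding proper_partition_def by (metis UN_I finite_atLeastAtMost finite_subset subsetI)

lemma proper_partition_exchange: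
  assumes "proper_partition n m Js" "h \<in> {1..m}" "i \<in> {1..m}" "h \<noteq> i"
    "X \<subseteq> Js h" "Y \<subseteq> Js i"
  shows "proper_partition n m (Js(h := Js h - X \<union> Y, i := Js i - Y \<union> X))"
proof -
  let ?Js' = "Js(h := Js h - X \<union> Y, i := Js i - Y \<union> X)"
  have parts: "(\<Union>k\<in>{1..m}. Js k) = {1..n}"
    "\<And>k k'. k \<in> {1..m} \<Longrightarrow> k' \<in> {1..m} \<Longrightarrow> k \<noteq> k' \<Longrightarrow> Js k \<inter> Js k' = {}"
    using assms(1) unfolding proper_partition_def by blast+
  have owner: "x \<in> ?Js' k \<longleftrightarrow> (if x \<in> X then k = i else if x \<in> Y then k = h else x \<in> Js k)"
    if "k \<in> {1..m}" for x k
  proof -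
    have "X \<inter> Js k = {}" if "k \<noteq> h" using parts(2)[of h k] \<open>k \<in> {1..m}\<close> that assms(2,5) by blast
    moreover have "Y \<inter> Js k = {}" if "k \<noteq> i" using parts(2)[of i k] \<open>k \<in> {1..m}\<close> that assms(3,6) by blast
    ultimately show ?thesis using assms(4-6) by auto
  qed
  have "(\<Union>k\<in>{1..m}. ?Js' k) = (\<Union>k\<in>{1..m}. Js k)"
  proof (intro equalityI subsetI)
    fix x assume "x \<in> (\<Union>k\<in>{1..m}. ?Js' k)"
    then obtain k where "k \<in> {1..m}" "x \<in> ?Js' k" by blast
    then show "x \<in> (\<Union>k\<in>{1..m}. Js k)"
      using owner[of k x] assms(2,3,5,6) by (auto split: if_splits)
  next
    fix x assume "x \<in> (\<Union>k\<in>{1..m}. Js k)"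
    then obtain k where "k \<in> {1..m}" "x \<in> Js k" by blast
    then show "x \<in> (\<Union>k\<in>{1..m}. ?Js' k)"
      using owner[of i x] owner[of h x] owner[of k x] assms(2,3) by (cases "x \<in> X \<or> x \<in> Y") auto
  qed
  moreover have "?Js' k \<inter> ?Js' k' = {}" if "k \<in> {1..m}" "k' \<in> {1..m}" "k \<noteq> k'" for k k'
  proof (intro equals0I)
    fix x assume "x \<in> ?Js' k \<inter> ?Js' k'"
    then show False
      using owner[OF that(1), of x] owner[OF that(2), of x] parts(2)[OF that] that(3)
      by (auto split: if_splits)
  qed
  ultimately show ?thesis using parts(1) unfolding proper_partition_def by simp
qed

lemma ctime_eq_start_time:
  assumes "proper_partition n m Ks" "\<And>k. k \<in> {1..m} \<Longrightarrow> set (L k) = Ks k"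
    "k \<in> {1..m}" "j \<in> Ks k"
  shows "ctime p m L j = start_time p (L k) j + p j"
proof -
  have "ctime p m L j = (\<Sum>k'\<in>{1..m}. if k' = k then start_time p (L k) j + p j else 0)"
    unfolding ctime_def start_time_def
  proof (intro sum.cong refl)
    fix k' assume "k' \<in> {1..m}"
    then have "j \<in> set (L k') \<longleftrightarrow> k' = k"
      using assms unfolding proper_partition_def by blast
    then show "(if j \<in> set (L k') then sum_list (map p (takeWhile (\<lambda>k. k \<noteq> j) (L k'))) + p j else 0)
      = (if k' = k then sum_list (map p (takeWhile (\<lambda>k'. k' \<noteq> j) (L k))) + p j else 0)"
      by simp
  qed
  then show ?thesis using assms(3) by simp
qed

lemma seqs_of_JH:
  assumes "finite (Js h)"
  obtains as bs where "seqs_of Js h = as @ sorted_list_of_set (JH n p Js jstar h) @ bs"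
    "sum_list (map p as) + P p (JH n p Js jstar h) = P p (Jpre Js h jstar)"
proof -
  let ?S = "sorted_list_of_set (Jpre Js h jstar)"
  let ?d = "card (Jpre Js h jstar) - 2 * pmax n p"
  have fin: "finite (Jpre Js h jstar)" using assms by (simp add: Jpre_def)
  have H: "sorted_list_of_set (JH n p Js jstar h) = drop ?d ?S"
    unfolding JH_def by (simp add: sorted_list_of_set_set_sorted)
  have "seqs_of Js h = take ?d ?S @ drop ?d ?S @ sorted_list_of_set (Js h - Jpre Js h jstar)"
    using seqs_of_split_Jpre[of Js h jstar] assms by simp
  moreover have "sum_list (map p (take ?d ?S)) + P p (JH n p Js jstar h) = P p (Jpre Js h jstar)"
    using sum_list_sorted_list_of_set[OF fin, of p] H
      sum_list_sorted_list_of_set[of "JH n p Js jstar h" p]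
    by (metis JH_def List.finite_set append_take_drop_id map_append sum_list_append)
  ultimately show thesis using that H by simp
qed

lemma seqs_of_JI:
  assumes "finite (Js i)"
  obtains bs where "seqs_of Js i =
    sorted_list_of_set (Jpre Js i jstar) @ sorted_list_of_set (JI n p Js jstar i) @ bs"
proof -
  let ?T = "sorted_list_of_set (Js i - Jpre Js i jstar)"
  have "sorted_list_of_set (JI n p Js jstar i) = take (2 * pmax n p) ?T"
    unfolding JI_def by (simp add: sorted_list_of_set_set_sorted)
  then show thesis
    using that[of "drop (2 * pmax n p) ?T"] seqs_of_split_Jpre[of Js i jstar] assms by simp
qed

lemma card_JH_le: "card (JH n p Js jstar h) \<le> 2 * pmax n p"
  unfolding JH_def by (rule order_trans[OF card_length]) simp

lemma card_JI_le: "card (JI n p Js jstar i) \<le> 2 * pmax n p"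
  unfolding JI_def by (rule order_trans[OF card_length]) simp

lemma JH_subset: "finite (Js h) \<Longrightarrow> JH n p Js jstar h \<subseteq> Js h"
  unfolding JH_def Jpre_def by (auto dest: in_set_dropD)

lemma JI_subset: "finite (Js i) \<Longrightarrow> JI n p Js jstar i \<subseteq> Js i - Jpre Js i jstar"
  unfolding JI_def by (auto dest: in_set_takeD)

locale swap_step =
  fixes n m :: nat and p :: "nat \<Rightarrow> nat" and Js :: "nat \<Rightarrow> nat set"
    and jstar h i :: nat and H' I' :: "nat set"
  assumes pos: "\<forall>j\<in>{1..n}. p j > 0"
    and part: "proper_partition n m Js"
    and adm: "admissible_swap n m p Js jstar h i"
    and H'sub: "H' \<subseteq> JH n p Js jstar h" and H'ne: "H' \<noteq> {}"
    and I'sub: "I' \<subseteq> JI n p Js jstar i" and I'ne: "I' \<noteq> {}"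
    and eqP: "P p H' = P p I'"
begin

abbreviation "H \<equiv> JH n p Js jstar h"
abbreviation "I \<equiv> JI n p Js jstar i"
abbreviation "L \<equiv> seqs_of Js"
abbreviation "L' \<equiv> intermediate n p Js jstar h i H' I'"
abbreviation "Js' \<equiv> Js(h := Js h - H' \<union> I', i := Js i - I' \<union> H')"

lemma machines: "h \<in> {1..m}" "i \<in> {1..m}"
  using adm unfolding admissible_swap_def by auto

lemma finite_machines: "finite (Js h)" "finite (Js i)"
  using proper_partition_finite[OF part] machines by auto

lemma jobs_subset: "Js k \<subseteq> {1..n}" if "k \<in> {1..m}"
  using part that unfolding proper_partition_def by blast

lemma H_subset: "H \<subseteq> Js h" and I_subset: "I \<subseteq> Js i - Jpre Js i jstar"
  using JH_subset JI_subset finite_machines by auto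

lemma finite_H: "finite H" and finite_I: "finite I"
  using H_subset I_subset finite_machines finite_subset by blast+

lemma gap: "P p (Jpre Js i jstar) + P p I + P p H \<le> P p (Jpre Js h jstar)"
proof -
  let ?pm = "pmax n p"
  have "P p I \<le> 2 * (?pm * ?pm)"
    using P_le_card_pmax[of I n p] card_JI_le[of n p Js jstar i] I_subset jobs_subset machines
    by (metis Diff_subset mult.assoc mult_le_mono1 order_trans)
  moreover have "P p H \<le> 2 * (?pm * ?pm)"
    using P_le_card_pmax[of H n p] card_JH_le[of n p Js jstar h] H_subset jobs_subset machines
    by (metis mult.assoc mult_le_mono1 order_trans)
  moreover have "P p (Jpre Js i jstar) + 4 * (?pm * ?pm) \<le> P p (Jpre Js h jstar)"
  proof -
    have "int (P p (Jpre Js i jstar) + 4 * (?pm * ?pm)) \<le> int (P p (Jpre Js h jstar))"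
      using adm unfolding admissible_swap_def Delta_def power2_eq_square by simp
    then show ?thesis by linarith
  qed
  ultimately show ?thesis by linarith
qed

lemma h_neq_i: "h \<noteq> i"
proof
  assume "h = i"
  then have "P p H = 0" using gap by simp
  moreover have "0 < P p H"
    using H'sub H'ne H_subset jobs_subset[OF machines(1)] pos finite_H
    unfolding P_def by (metis ex_in_conv subset_iff sum_pos2 zero_le)
  ultimately show False by simp
qed

lemma machines_disjoint: "Js h \<inter> Js i = {}"
  using part machines h_neq_i unfolding proper_partition_def by blast

lemma intermediate_h:
  obtains as bs where "L h = as @ sorted_list_of_set H @ bs"
    "L' h = as @ (filter (\<lambda>k. k \<notin> H') (sorted_list_of_set H) @ sorted_list_of_set I') @ bs"
    "sum_list (map p as) + P p H = P p (Jpre Js h jstar)"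
proof -
  obtain as bs where Lh: "L h = as @ sorted_list_of_set H @ bs"
    and sum: "sum_list (map p as) + P p H = P p (Jpre Js h jstar)"
    using seqs_of_JH finite_machines(1) by blast
  have "distinct (as @ sorted_list_of_set H @ bs)"
    using Lh distinct_seqs_of by metis
  moreover have "sorted_list_of_set H \<noteq> []"
    using H'sub H'ne finite_H by auto
  ultimately have "replace_block (L h) H ys = as @ ys @ bs" for ys
    using replace_block_append Lh finite_H by (metis set_sorted_list_of_set)
  then show thesis
    using that[OF Lh _ sum] h_neq_i unfolding intermediate_def Let_def by simp
qed

lemma intermediate_i:
  obtains bs where "L i = sorted_list_of_set (Jpre Js i jstar) @ sorted_list_of_set I @ bs"
    "L' i = sorted_list_of_set (Jpre Js i jstar)
      @ (sorted_list_of_set H' @ filter (\<lambda>k. k \<notin> I') (sorted_list_of_set I)) @ bs"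
proof -
  obtain bs where Li: "L i = sorted_list_of_set (Jpre Js i jstar) @ sorted_list_of_set I @ bs"
    using seqs_of_JI finite_machines(2) by blast
  have "distinct (sorted_list_of_set (Jpre Js i jstar) @ sorted_list_of_set I @ bs)"
    using Li distinct_seqs_of by metis
  moreover have "sorted_list_of_set I \<noteq> []"
    using I'sub I'ne finite_I by auto
  ultimately have "replace_block (L i) I ys = sorted_list_of_set (Jpre Js i jstar) @ ys @ bs" for ys
    using replace_block_append Li finite_I by (metis set_sorted_list_of_set)
  then show thesis
    using that[OF Li] unfolding intermediate_def Let_def by simp
qed

lemma intermediate_other: "k \<noteq> h \<Longrightarrow> k \<noteq> i \<Longrightarrow> L' k = L k"
  unfolding intermediate_def Let_def by simp

lemma set_seqs_of: "set (L k) = Js k" if "k \<in> {1..m}"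
  using proper_partition_finite[OF part that] unfolding seqs_of_def by simp

lemma set_intermediate: "set (L' k) = Js' k" if "k \<in> {1..m}"
proof -
  consider "k = h" | "k = i" | "k \<noteq> h" "k \<noteq> i" by blast
  then show ?thesis
  proof cases
    case 1
    obtain as bs where Lh: "L h = as @ sorted_list_of_set H @ bs"
      and L'h: "L' h = as @ (filter (\<lambda>k. k \<notin> H') (sorted_list_of_set H) @ sorted_list_of_set I') @ bs"
      using intermediate_h by blast
    have "set (L h) - H' = set as \<union> (H - H') \<union> set bs"
      using Lh distinct_seqs_of[of Js h] H'sub finite_H by auto
    then show ?thesis
      using 1 h_neq_i L'h set_seqs_of[OF machines(1)] finite_H finite_subset[OF I'sub finite_I]
      by auto
  next
    case 2
    obtain bs where Li: "L i = sorted_list_of_set (Jpre Js i jstar) @ sorted_list_of_set I @ bs"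
      and L'i: "L' i = sorted_list_of_set (Jpre Js i jstar)
        @ (sorted_list_of_set H' @ filter (\<lambda>k. k \<notin> I') (sorted_list_of_set I)) @ bs"
      using intermediate_i by blast
    have "set (L i) - I' = set (sorted_list_of_set (Jpre Js i jstar)) \<union> (I - I') \<union> set bs"
      using Li distinct_seqs_of[of Js i] I'sub finite_I by auto
    then show ?thesis
      using 2 h_neq_i L'i set_seqs_of[OF machines(2)] finite_I finite_subset[OF H'sub finite_H]
      by auto
  next
    case 3
    then show ?thesis using intermediate_other set_seqs_of[OF that] by simp
  qed
qed

lemma ctime_seqs_of: "ctime p m L j = start_time p (L k) j + p j" if "k \<in> {1..m}" "j \<in> Js k"
  using ctime_eq_start_time[OF part set_seqs_of that] .

lemma ctime_intermediate: "ctime p m L' j = start_time p (L' k) j + p j" if "k \<in> {1..m}" "j \<in> Js' k"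
proof -
  have "H' \<subseteq> Js h" "I' \<subseteq> Js i" using H'sub I'sub H_subset I_subset by auto
  then have "proper_partition n m Js'" by (rule proper_partition_exchange[OF part machines h_neq_i])
  from ctime_eq_start_time[where L = L', OF this set_intermediate that] show ?thesis .
qed

lemma ctime_H_lower: "P p (Jpre Js h jstar) \<le> ctime p m L j + P p H" if "j \<in> H"
proof -
  obtain as bs where Lh: "L h = as @ sorted_list_of_set H @ bs"
    and sum: "sum_list (map p as) + P p H = P p (Jpre Js h jstar)"
    using intermediate_h by blast
  have "distinct (as @ sorted_list_of_set H @ bs)"
    using Lh distinct_seqs_of by metis
  then have "j \<notin> set as" using that finite_H by auto
  then have "sum_list (map p as) \<le> ctime p m L j"
    using ctime_seqs_of[OF machines(1)] that H_subset Lh by (auto simp: start_time_append_notin)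
  then show ?thesis using sum by simp
qed

lemma finite_Jpre_i: "finite (Jpre Js i jstar)"
  using finite_machines(2) unfolding Jpre_def by simp

lemma ctime_I_upper: "ctime p m L j \<le> P p (Jpre Js i jstar) + P p I" if "j \<in> I"
proof -
  let ?S = "sorted_list_of_set (Jpre Js i jstar)"
  obtain bs where Li: "L i = ?S @ sorted_list_of_set I @ bs"
    using intermediate_i by blast
  have "j \<notin> set ?S" "j \<in> set (sorted_list_of_set I)" "j \<in> Js i"
    using that I_subset finite_I finite_Jpre_i by auto
  then have "ctime p m L j = P p (Jpre Js i jstar) + start_time p (sorted_list_of_set I) j + p j"
    using ctime_seqs_of[OF machines(2)] Li finite_Jpre_i
    by (simp add: start_time_append_notin start_time_append_in sum_list_sorted_list_of_set)
  also have "\<dots> \<le> P p (Jpre Js i jstar) + P p I"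
    using start_time_add_le_sum_list[of j "sorted_list_of_set I" p] that finite_I
    by (simp add: sum_list_sorted_list_of_set)
  finally show ?thesis .
qed

lemma ctime_intermediate_H'_upper: "ctime p m L' j \<le> P p (Jpre Js i jstar) + P p H'" if "j \<in> H'"
proof -
  let ?S = "sorted_list_of_set (Jpre Js i jstar)" and ?H' = "sorted_list_of_set H'"
  obtain bs where L'i: "L' i = ?S @ (?H' @ filter (\<lambda>k. k \<notin> I') (sorted_list_of_set I)) @ bs"
    using intermediate_i by blast
  have fin: "finite H'" using H'sub finite_H finite_subset by blast
  have "j \<in> Js h" using that H'sub H_subset by blast
  then have "j \<notin> set ?S"
    using finite_Jpre_i machines_disjoint unfolding Jpre_def by auto
  moreover have "j \<in> Js' i" "j \<in> set ?H'" using that h_neq_i fin by auto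
  ultimately have "ctime p m L' j = P p (Jpre Js i jstar) + start_time p ?H' j + p j"
    using ctime_intermediate[OF machines(2)] L'i finite_Jpre_i
    by (simp add: start_time_append_notin start_time_append_in sum_list_sorted_list_of_set)
  also have "\<dots> \<le> P p (Jpre Js i jstar) + P p H'"
    using start_time_add_le_sum_list[of j ?H' p] \<open>j \<in> set ?H'\<close> fin
    by (simp add: sum_list_sorted_list_of_set)
  finally show ?thesis .
qed

lemma ctime_intermediate_I'_lower: "P p (Jpre Js h jstar) \<le> ctime p m L' j + P p H" if "j \<in> I'"
proof -
  obtain as bs where Lh: "L h = as @ sorted_list_of_set H @ bs"
    and L'h: "L' h = as @ (filter (\<lambda>k. k \<notin> H') (sorted_list_of_set H) @ sorted_list_of_set I') @ bs"
    and sum: "sum_list (map p as) + P p H = P p (Jpre Js h jstar)"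
    using intermediate_h by blast
  have "j \<in> Js i" using that I'sub I_subset by blast
  then have "j \<notin> Js h" using machines_disjoint by blast
  then have "j \<notin> set as" using Lh set_seqs_of[OF machines(1)] by auto
  moreover have "j \<in> Js' h" using that h_neq_i by simp
  ultimately have "sum_list (map p as) \<le> ctime p m L' j"
    using ctime_intermediate[OF machines(1)] L'h by (simp add: start_time_append_notin)
  then show ?thesis using sum by simp
qed

lemma ctime_moved_H': "ctime p m L' j \<le> ctime p m L j" if "j \<in> H'"
proof -
  have "j \<in> H" using that H'sub by blast
  moreover have "P p H' \<le> P p I" using eqP P_mono[OF finite_I I'sub] by simp
  ultimately show ?thesis
    using ctime_intermediate_H'_upper[OF that] ctime_H_lower gap by fastforce
qed

lemma ctime_moved_I': "ctime p m L j \<le> ctime p m L' j" if "j \<in> I'"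
proof -
  have "j \<in> I" using that I'sub by blast
  then show ?thesis using ctime_intermediate_I'_lower[OF that] ctime_I_upper gap by fastforce
qed

lemma sum_list_block_h:
  "sum_list (map p (filter (\<lambda>k. k \<notin> H') (sorted_list_of_set H) @ sorted_list_of_set I'))
    = sum_list (map p (sorted_list_of_set H))"
proof -
  have "{x \<in> H. x \<notin> H'} = H - H'" by blast
  then show ?thesis
    using P_diff_add[OF finite_H H'sub] eqP finite_H finite_subset[OF I'sub finite_I]
    by (simp add: sum_list_filter_sorted_list_of_set sum_list_sorted_list_of_set)
qed

lemma sum_list_block_i:
  "sum_list (map p (sorted_list_of_set H' @ filter (\<lambda>k. k \<notin> I') (sorted_list_of_set I)))
    = sum_list (map p (sorted_list_of_set I))"
proof -
  have "{x \<in> I. x \<notin> I'} = I - I'" by blast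
  then show ?thesis
    using P_diff_add[OF finite_I I'sub] eqP finite_I finite_subset[OF H'sub finite_H]
    by (simp add: sum_list_filter_sorted_list_of_set sum_list_sorted_list_of_set)
qed

lemma ctime_h_outside_H: "ctime p m L' j = ctime p m L j" if "j \<in> Js h - H"
proof -
  obtain as bs where Lh: "L h = as @ sorted_list_of_set H @ bs"
    and L'h: "L' h = as @ (filter (\<lambda>k. k \<notin> H') (sorted_list_of_set H) @ sorted_list_of_set I') @ bs"
    using intermediate_h by blast
  have "j \<notin> I'" using that I'sub I_subset machines_disjoint by blast
  then have "start_time p (L' h) j = start_time p (L h) j"
    unfolding Lh L'h using that finite_H finite_subset[OF I'sub finite_I]
    by (intro start_time_replace_same_sum sum_list_block_h) auto
  moreover have "j \<in> Js' h" using that H'sub h_neq_i \<open>j \<notin> I'\<close> by auto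
  ultimately show ?thesis
    using ctime_intermediate[OF machines(1)] ctime_seqs_of[OF machines(1)] that by simp
qed

lemma ctime_i_outside_I: "ctime p m L' j = ctime p m L j" if "j \<in> Js i - I"
proof -
  obtain bs where Li: "L i = sorted_list_of_set (Jpre Js i jstar) @ sorted_list_of_set I @ bs"
    and L'i: "L' i = sorted_list_of_set (Jpre Js i jstar)
      @ (sorted_list_of_set H' @ filter (\<lambda>k. k \<notin> I') (sorted_list_of_set I)) @ bs"
    using intermediate_i by blast
  have "j \<notin> H'" using that H'sub H_subset machines_disjoint by blast
  then have "start_time p (L' i) j = start_time p (L i) j"
    unfolding Li L'i using that finite_I finite_subset[OF H'sub finite_H]
    by (intro start_time_replace_same_sum sum_list_block_i) auto
  moreover have "j \<in> Js' i" using that I'sub \<open>j \<notin> H'\<close> by auto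
  ultimately show ?thesis
    using ctime_intermediate[OF machines(2)] ctime_seqs_of[OF machines(2)] that by simp
qed

lemma ctime_other_machine: "ctime p m L' j = ctime p m L j"
  if "k \<in> {1..m}" "k \<noteq> h" "k \<noteq> i" "j \<in> Js k"
  using ctime_intermediate[OF that(1)] ctime_seqs_of[OF that(1,4)] intermediate_other that by simp

lemma ctime_H_remaining: "ctime p m L' j \<le> ctime p m L j" if "j \<in> H - H'"
proof -
  let ?H = "sorted_list_of_set H"
  obtain as bs where Lh: "L h = as @ ?H @ bs"
    and L'h: "L' h = as @ (filter (\<lambda>k. k \<notin> H') ?H @ sorted_list_of_set I') @ bs"
    using intermediate_h by blast
  have "distinct (as @ ?H @ bs)"
    using Lh distinct_seqs_of by metis
  then have "j \<notin> set as" "j \<in> set (filter (\<lambda>k. k \<notin> H') ?H)" "j \<in> set ?H"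
    using that finite_H by auto
  then have "start_time p (L' h) j \<le> start_time p (L h) j"
    unfolding Lh L'h using start_time_filter_le[of "\<lambda>k. k \<notin> H'" j p ?H] that
    by (simp add: start_time_append_notin start_time_append_in)
  moreover have "j \<in> Js' h" "j \<in> Js h" using that H_subset h_neq_i by auto
  ultimately show ?thesis
    using ctime_intermediate[OF machines(1)] ctime_seqs_of[OF machines(1)] by simp
qed

lemma ctime_I_remaining: "ctime p m L j \<le> ctime p m L' j" if "j \<in> I - I'"
proof -
  let ?S = "sorted_list_of_set (Jpre Js i jstar)" and ?I = "sorted_list_of_set I"
  obtain bs where Li: "L i = ?S @ ?I @ bs"
    and L'i: "L' i = ?S @ (sorted_list_of_set H' @ filter (\<lambda>k. k \<notin> I') ?I) @ bs"
    using intermediate_i by blast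
  have fin: "finite H'" using H'sub finite_H finite_subset by blast
  have "j \<in> Js i" using that I_subset by blast
  then have "j \<notin> set ?S" "j \<notin> set (sorted_list_of_set H')" "j \<in> set ?I"
    "j \<in> set (filter (\<lambda>k. k \<notin> I') ?I)"
    using that I_subset H'sub H_subset machines_disjoint finite_Jpre_i finite_I fin by auto
  moreover have "sum_list (map p (filter (\<lambda>k. \<not> k \<notin> I') ?I)) = P p H'"
  proof -
    have "{k \<in> I. \<not> k \<notin> I'} = I'" using I'sub by blast
    then show ?thesis using eqP finite_I by (simp add: sum_list_filter_sorted_list_of_set)
  qed
  ultimately have "start_time p (L i) j \<le> start_time p (L' i) j"
    unfolding Li L'i using start_time_le_filter[of p ?I j "\<lambda>k. k \<notin> I'"] fin
    by (simp add: start_time_append_notin start_time_append_in sum_list_sorted_list_of_set)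
  moreover have "j \<in> Js' i" using that \<open>j \<in> Js i\<close> by auto
  ultimately show ?thesis
    using ctime_intermediate[OF machines(2)] ctime_seqs_of[OF machines(2) \<open>j \<in> Js i\<close>] by simp
qed

lemma ctime_unaffected: "ctime p m L' j = ctime p m L j" if "j \<in> {1..n} - (H \<union> I)"
proof -
  have "j \<in> (\<Union>k\<in>{1..m}. Js k)" using that part unfolding proper_partition_def by simp
  then obtain k where k: "k \<in> {1..m}" "j \<in> Js k" by blast
  consider "k = h" | "k = i" | "k \<noteq> h" "k \<noteq> i" by blast
  then show ?thesis
  proof cases
    case 1
    then show ?thesis using k that by (intro ctime_h_outside_H) auto
  next
    case 2
    then show ?thesis using k that by (intro ctime_i_outside_I) auto
  next
    case 3
    then show ?thesis using k ctime_other_machine by blast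
  qed
qed

lemma ctime_H: "ctime p m L' j \<le> ctime p m L j" if "j \<in> H"
  using that ctime_moved_H' ctime_H_remaining by (cases "j \<in> H'") auto

lemma ctime_I: "ctime p m L j \<le> ctime p m L' j" if "j \<in> I"
  using that ctime_moved_I' ctime_I_remaining by (cases "j \<in> I'") auto

end

theorem lemma4:
  fixes n m :: nat and p :: "nat \<Rightarrow> nat" and Js :: "nat \<Rightarrow> nat set"
    and jstar h i :: nat and H' I' :: "nat set"
  assumes pos: "\<forall>j\<in>{1..n}. p j > 0"
    and part: "proper_partition n m Js"
    and adm: "admissible_swap n m p Js jstar h i"
    and H'sub: "H' \<subseteq> JH n p Js jstar h" and H'ne: "H' \<noteq> {}"
    and I'sub: "I' \<subseteq> JI n p Js jstar i" and I'ne: "I' \<noteq> {}"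
    and eqP: "P p H' = P p I'"
  shows "(\<forall>j\<in>{1..n} - (JH n p Js jstar h \<union> JI n p Js jstar i).
            ctime p m (intermediate n p Js jstar h i H' I') j = ctime p m (seqs_of Js) j)
       \<and> (\<forall>j\<in>JH n p Js jstar h.
            ctime p m (intermediate n p Js jstar h i H' I') j \<le> ctime p m (seqs_of Js) j)
       \<and> (\<forall>j\<in>JI n p Js jstar i.
            ctime p m (intermediate n p Js jstar h i H' I') j \<ge> ctime p m (seqs_of Js) j)"
proof -
  interpret swap_step n m p Js jstar h i H' I'
    using assms by unfold_locales
  show ?thesis using ctime_unaffected ctime_H ctime_I by blast
qed

end
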